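(* For each $n\ge1$ let $f_n:\{1,\dots,n\}^2\to[0,\infty)$ be non-decreasing in each of its two arguments separately. Suppose that $\liminf_{n\to\infty}f_n(p_n,q_n)>0$ for every sequence $\{(p_n,q_n)\}$ with $1\le q_n\le p_n\le n$ satisfying any one of the following conditions: (i) $q_n\equiv1$ and $\lim_{n\to\infty}p_n/n$ exists and lies in $(0,1)$; (ii) $q_n\to\infty$, $\lim_{n\to\infty}q_n/p_n=0$, and $\lim_{n\to\infty}p_nq_n/n$ exists and lies in $(0,\infty)$; (iii) $\lim_{n\to\infty}p_n/\sqrt n$ and $\lim_{n\to\infty}q_n/\sqrt n$ exist and lie in $(0,\infty)$. Then $\liminf_{n\to\infty}f_n(p_n,q_n)>0$ for every sequence $\{(p_n,q_n)\}$ with $1\le q_n\le p_n\le n$ such that $\lim_{n\to\infty}p_nq_n/n$ exists and lies in $(0,\infty)$. *)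

theory Defs
  imports Complex_Main "HOL-Library.Extended_Real"
begin

definition admissible :: "(nat \<Rightarrow> nat) \<Rightarrow> (nat \<Rightarrow> nat) \<Rightarrow> bool" where
  "admissible p q \<longleftrightarrow> (\<forall>n\<ge>1. 1 \<le> q n \<and> q n \<le> p n \<and> p n \<le> n)"

end

theory Submission
  imports Defs "HOL-Analysis.Extended_Real_Limits" "HOL-Real_Asymp.Real_Asymp"
begin

text \<open>
  If the liminf along \<open>(p, q)\<close> were not positive, some subsequence \<open>R\<close> would carry
  \<open>f n (p n) (q n)\<close> to a limit \<open>\<le> 0\<close>. Since \<open>p n * q n \<approx> c * n\<close>, along \<open>R\<close> one of three
  things happens. If \<open>q\<close> is bounded by \<open>M\<close> infinitely often, then there \<open>p n \<ge> \<alpha> * n\<close>, and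
  by monotonicity \<open>f\<close> dominates the regime (i) pair \<open>(\<lfloor>\<alpha> n\<rfloor>, 1)\<close>. If \<open>q \<ge> \<delta> * p\<close>
  infinitely often, then there \<open>q n \<ge> \<beta> * sqrt n\<close>, and \<open>f\<close> dominates the regime (iii) pair
  \<open>(\<lfloor>\<beta> sqrt n\<rfloor>, \<lfloor>\<beta> sqrt n\<rfloor>)\<close>. Otherwise \<open>q \<rightarrow> \<infinity>\<close> and \<open>q / p \<rightarrow> 0\<close> along \<open>R\<close>, and
  filling the indices outside \<open>R\<close> with a fixed regime (ii) pair of product limit \<open>c\<close> gives
  a regime (ii) pair that agrees with \<open>(p, q)\<close> on \<open>R\<close>. Either way a sequence with positive
  liminf lies below \<open>f n (p n) (q n)\<close> infinitely often along \<open>R\<close>, a contradiction.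
\<close>

definition pos_floor :: "real \<Rightarrow> nat" where
  "pos_floor x = max 1 (nat \<lfloor>x\<rfloor>)"

lemma pos_floor_pos [simp]: "0 < pos_floor x"
  by (simp add: pos_floor_def)

lemma pos_floor_le: "1 \<le> m \<Longrightarrow> x \<le> real m \<Longrightarrow> pos_floor x \<le> m"
  unfolding pos_floor_def by linarith

lemma pos_floor_bounds: "1 \<le> x \<Longrightarrow> x - 1 < real (pos_floor x) \<and> real (pos_floor x) \<le> x"
  unfolding pos_floor_def by linarith

lemma tendsto_pos_floor_div:
  fixes g :: "'a \<Rightarrow> real"
  assumes g: "filterlim g at_top F"
  shows "((\<lambda>x. real (pos_floor (g x)) / g x) \<longlongrightarrow> 1) F"
proof (rule tendsto_sandwich)
  have large: "\<forall>\<^sub>F x in F. 1 \<le> g x"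
    using g by (simp add: filterlim_at_top)
  show "\<forall>\<^sub>F x in F. 1 - inverse (g x) \<le> real (pos_floor (g x)) / g x"
    using large
  proof eventually_elim
    case (elim x)
    have "1 - inverse (g x) = (g x - 1) / g x"
      using elim by (simp add: field_simps)
    also have "\<dots> \<le> real (pos_floor (g x)) / g x"
      using pos_floor_bounds[OF elim] elim by (intro divide_right_mono) auto
    finally show ?case .
  qed
  show "\<forall>\<^sub>F x in F. real (pos_floor (g x)) / g x \<le> 1"
    using large by eventually_elim (use pos_floor_bounds in auto)
  show "((\<lambda>x. 1 - inverse (g x)) \<longlongrightarrow> 1) F"
    using tendsto_diff[OF tendsto_const tendsto_inverse_0_at_top[OF g]] by simp
qed simp

lemma tendsto_pos_floor_scaled_div:
  fixes g :: "'a \<Rightarrow> real"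
  assumes g: "filterlim g at_top F" and \<alpha>: "0 < \<alpha>"
  shows "((\<lambda>x. real (pos_floor (\<alpha> * g x)) / g x) \<longlongrightarrow> \<alpha>) F"
proof -
  have "filterlim (\<lambda>x. \<alpha> * g x) at_top F"
    using filterlim_tendsto_pos_mult_at_top[OF tendsto_const \<alpha> g] .
  from tendsto_mult[OF tendsto_const[of \<alpha>] tendsto_pos_floor_div[OF this]]
  show ?thesis using \<alpha> by simp
qed

lemma Liminf_pos_if_dominates_along_subseqs:
  fixes F :: "nat \<Rightarrow> real"
  assumes dom: "\<And>R. strict_mono R \<Longrightarrow> \<exists>G. 0 < Liminf sequentially (\<lambda>n. ereal (G n)) \<and>
                  (\<exists>\<^sub>F j in sequentially. G (R j) \<le> F (R j))"
  shows "0 < Liminf sequentially (\<lambda>n. ereal (F n))"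
proof (rule ccontr)
  assume "\<not> ?thesis"
  then have nonpos: "liminf (\<lambda>n. ereal (F n)) \<le> 0" by simp
  obtain R where R: "strict_mono R" and lim: "(\<lambda>j. ereal (F (R j))) \<longlonglongrightarrow> liminf (\<lambda>n. ereal (F n))"
    using liminf_subseq_lim[of "\<lambda>n. ereal (F n)"] by (auto simp: comp_def)
  obtain G where G: "0 < Liminf sequentially (\<lambda>n. ereal (G n))"
    and below: "\<exists>\<^sub>F j in sequentially. G (R j) \<le> F (R j)"
    using dom[OF R] by blast
  obtain y :: ereal where y: "0 < y" "y < Liminf sequentially (\<lambda>n. ereal (G n))"
    using G dense by blast
  have "\<forall>\<^sub>F n in sequentially. y < ereal (G n)"
    using le_Liminf_iff[THEN iffD1, OF order.refl] y(2) by blast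
  then have G_large: "\<forall>\<^sub>F j in sequentially. y < ereal (G (R j))"
    using filterlim_iff[THEN iffD1, OF filterlim_subseq[OF R]] by blast
  have F_small: "\<forall>\<^sub>F j in sequentially. ereal (F (R j)) < y"
    using order_tendstoD(2)[OF lim] nonpos y(1) by (simp add: le_less_trans)
  have "\<forall>\<^sub>F j in sequentially. \<not> G (R j) \<le> F (R j)"
    using G_large F_small by eventually_elim (use less_trans in fastforce)
  with below show False by (simp add: frequently_def)
qed

lemma filterlim_if_range_strict_mono:
  assumes R: "strict_mono R" and s: "filterlim (\<lambda>j. s (R j)) F sequentially"
    and d: "filterlim d F sequentially"
  shows "filterlim (\<lambda>n. if n \<in> range R then s n else d n) F sequentially"
  unfolding filterlim_iff
proof (intro allI impI)
  fix P assume P: "eventually P F"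
  from s P obtain K where K: "\<And>j. K \<le> j \<Longrightarrow> P (s (R j))"
    unfolding filterlim_iff eventually_sequentially by blast
  from d P obtain N where N: "\<And>n. N \<le> n \<Longrightarrow> P (d n)"
    unfolding filterlim_iff eventually_sequentially by blast
  have "P (if n \<in> range R then s n else d n)" if n: "max (R K) N \<le> n" for n
  proof (cases "n \<in> range R")
    case True
    then obtain j where j: "n = R j" by auto
    with n R have "K \<le> j" by (simp add: strict_mono_less_eq)
    with K j show ?thesis by simp
  qed (use N n in simp)
  then show "\<forall>\<^sub>F n in sequentially. P (if n \<in> range R then s n else d n)"
    unfolding eventually_sequentially by blast
qed

lemma sqrt_le_self: "1 \<le> x \<Longrightarrow> sqrt x \<le> x"
  by (rule real_le_lsqrt) (auto simp: power2_eq_square)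

lemma le_pos_floor: "real m \<le> x \<Longrightarrow> m \<le> pos_floor x"
  unfolding pos_floor_def by linarith

lemma exists_unbounded_below_sqrt:
  "\<exists>Q :: nat \<Rightarrow> nat. (\<forall>n. 0 < Q n) \<and> (\<forall>n\<ge>1. Q n \<le> n) \<and> filterlim Q at_top sequentially \<and>
     (\<lambda>n. real (Q n) ^ 2 / real n) \<longlonglongrightarrow> 0"
proof -
  define r where "r n = sqrt (sqrt (real n))" for n
  define Q where "Q n = pos_floor (r n)" for n
  have "Q n \<le> n" if n: "1 \<le> n" for n
  proof -
    have "1 \<le> real n" using n by simp
    then have "r n \<le> real n"
      unfolding r_def using real_sqrt_le_mono[OF sqrt_le_self] sqrt_le_self by (meson order.trans)
    then show ?thesis
      unfolding Q_def using n by (intro pos_floor_le) auto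
  qed
  moreover have bounds: "\<forall>\<^sub>F n in sequentially. r n - 1 < real (Q n) \<and> real (Q n) \<le> r n"
    using eventually_ge_at_top[of 1] by eventually_elim (simp add: Q_def r_def pos_floor_bounds)
  have "filterlim (\<lambda>n. real (Q n)) at_top sequentially"
  proof (rule filterlim_at_top_mono)
    show "filterlim (\<lambda>n. r n - 1) at_top sequentially"
      unfolding r_def by real_asymp
  qed (use bounds in \<open>auto elim: eventually_mono\<close>)
  then have "filterlim Q at_top sequentially"
    by (simp add: filterlim_sequentially_iff_filterlim_real)
  moreover have "(\<lambda>n. real (Q n) ^ 2 / real n) \<longlonglongrightarrow> 0"
  proof (rule tendsto_sandwich[OF _ _ tendsto_const])
    show "\<forall>\<^sub>F n in sequentially. real (Q n) ^ 2 / real n \<le> r n ^ 2 / real n"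
      using bounds by eventually_elim (auto intro!: divide_right_mono power_mono)
    show "(\<lambda>n. r n ^ 2 / real n) \<longlonglongrightarrow> 0"
      unfolding r_def by real_asymp
  qed simp
  moreover have "\<forall>n. 0 < Q n"
    by (simp add: Q_def)
  ultimately show ?thesis by blast
qed

lemma exists_regime_ii_with_limit:
  fixes c :: real
  assumes c: "0 < c"
  shows "\<exists>P Q. admissible P Q \<and> filterlim Q at_top sequentially \<and>
           (\<lambda>n. real (Q n) / real (P n)) \<longlonglongrightarrow> 0 \<and>
           (\<lambda>n. real (P n) * real (Q n) / real n) \<longlonglongrightarrow> c"
proof -
  obtain Q :: "nat \<Rightarrow> nat" where Q_pos: "\<And>n. 0 < Q n" and Q_le: "\<And>n. 1 \<le> n \<Longrightarrow> Q n \<le> n"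
    and Q_top: "filterlim Q at_top sequentially"
    and Q_sq: "(\<lambda>n. real (Q n) ^ 2 / real n) \<longlonglongrightarrow> 0"
    using exists_unbounded_below_sqrt by blast
  define P' where "P' n = pos_floor (c * (real n / real (Q n)))" for n
  define P where "P n = min n (max (Q n) (P' n))" for n
  have Q_top': "filterlim (\<lambda>n. real (Q n)) at_top sequentially"
    using Q_top by (simp add: filterlim_sequentially_iff_filterlim_real)
  have "\<forall>\<^sub>F n in sequentially. real (Q n) ^ 2 / real n < min c 1"
    using order_tendstoD(2)[OF Q_sq, of "min c 1"] c by simp
  then have Q_small: "\<forall>\<^sub>F n in sequentially. real (Q n) ^ 2 \<le> c * real n \<and> real (Q n) ^ 2 \<le> real n"
    using eventually_gt_at_top[of 0] by eventually_elim (simp add: divide_less_eq)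
  have "filterlim (\<lambda>n. real n / real (Q n)) at_top sequentially"
  proof (rule filterlim_at_top_mono[OF Q_top'])
    show "\<forall>\<^sub>F n in sequentially. real (Q n) \<le> real n / real (Q n)"
      using Q_small by eventually_elim (use Q_pos in \<open>simp add: le_divide_eq power2_eq_square\<close>)
  qed
  then have "(\<lambda>n. real (P' n) / (real n / real (Q n))) \<longlonglongrightarrow> c"
    unfolding P'_def by (rule tendsto_pos_floor_scaled_div[OF _ c])
  then have P'Q: "(\<lambda>n. real (P' n) * real (Q n) / real n) \<longlonglongrightarrow> c"
    by simp
  have P_eq: "\<forall>\<^sub>F n in sequentially. P n = P' n"
    using Q_small Q_top'[unfolded filterlim_at_top, rule_format, of c] eventually_ge_at_top[of 1]
  proof eventually_elim
    case (elim n)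
    have Q_n: "0 < real (Q n)"
      using Q_pos by simp
    have "real (Q n) \<le> c * (real n / real (Q n))"
      using elim Q_n by (simp add: le_divide_eq power2_eq_square)
    then have "Q n \<le> P' n"
      unfolding P'_def by (rule le_pos_floor)
    moreover have "c * (real n / real (Q n)) \<le> real n"
      using elim Q_n by (simp add: divide_le_eq mult_right_mono)
    then have "P' n \<le> n"
      unfolding P'_def using elim by (intro pos_floor_le) auto
    ultimately show ?case by (simp add: P_def)
  qed
  have Q_P': "(\<lambda>n. real (Q n) / real (P' n)) \<longlonglongrightarrow> 0"
  proof -
    have "(\<lambda>n. (real (Q n) ^ 2 / real n) / (real (P' n) * real (Q n) / real n)) \<longlonglongrightarrow> 0 / c"
      using c by (intro tendsto_divide Q_sq P'Q) auto
    moreover have "\<forall>\<^sub>F n in sequentially.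
        (real (Q n) ^ 2 / real n) / (real (P' n) * real (Q n) / real n) = real (Q n) / real (P' n)"
      using eventually_gt_at_top[of 0]
      by eventually_elim (use Q_pos in \<open>simp add: P'_def field_simps power2_eq_square\<close>)
    ultimately have "(\<lambda>n. real (Q n) / real (P' n)) \<longlonglongrightarrow> 0 / c"
      by (rule Lim_transform_eventually)
    then show ?thesis by simp
  qed
  have "(\<lambda>n. real (Q n) / real (P n)) \<longlonglongrightarrow> 0"
    using Q_P' by (rule Lim_transform_eventually) (use P_eq in \<open>auto elim: eventually_mono\<close>)
  moreover have "(\<lambda>n. real (P n) * real (Q n) / real n) \<longlonglongrightarrow> c"
    using P'Q by (rule Lim_transform_eventually) (use P_eq in \<open>auto elim: eventually_mono\<close>)
  moreover have "admissible P Q"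
    using Q_pos Q_le by (auto simp: admissible_def P_def Suc_le_eq)
  ultimately show ?thesis
    using Q_top by blast
qed

definition regime_i :: "(nat \<Rightarrow> nat) \<Rightarrow> (nat \<Rightarrow> nat) \<Rightarrow> bool" where
  "regime_i p q \<longleftrightarrow> admissible p q \<and> (\<forall>n\<ge>1. q n = 1) \<and>
     (\<exists>c. 0 < c \<and> c < 1 \<and> (\<lambda>n. real (p n) / real n) \<longlonglongrightarrow> c)"

definition regime_ii :: "(nat \<Rightarrow> nat) \<Rightarrow> (nat \<Rightarrow> nat) \<Rightarrow> bool" where
  "regime_ii p q \<longleftrightarrow> admissible p q \<and> filterlim q at_top sequentially \<and>
     (\<lambda>n. real (q n) / real (p n)) \<longlonglongrightarrow> 0 \<and>
     (\<exists>c. 0 < c \<and> (\<lambda>n. real (p n) * real (q n) / real n) \<longlonglongrightarrow> c)"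

definition regime_iii :: "(nat \<Rightarrow> nat) \<Rightarrow> (nat \<Rightarrow> nat) \<Rightarrow> bool" where
  "regime_iii p q \<longleftrightarrow> admissible p q \<and>
     (\<exists>a. 0 < a \<and> (\<lambda>n. real (p n) / sqrt (real n)) \<longlonglongrightarrow> a) \<and>
     (\<exists>b. 0 < b \<and> (\<lambda>n. real (q n) / sqrt (real n)) \<longlonglongrightarrow> b)"

lemma admissibleD: "admissible p q \<Longrightarrow> 1 \<le> n \<Longrightarrow> 1 \<le> q n \<and> q n \<le> p n \<and> p n \<le> n"
  by (simp add: admissible_def)

lemma linear_bound_of_bounded_factor:
  fixes \<alpha> c M t x y :: real
  assumes \<alpha>: "\<alpha> * (2 * (M + 1)) \<le> c" and "0 \<le> M" "0 \<le> t" "0 \<le> x" "y \<le> M"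
    and large: "c * t < 2 * (x * y)"
  shows "\<alpha> * t \<le> x"
proof -
  have "\<alpha> * t * (2 * (M + 1)) \<le> c * t"
    using mult_right_mono[OF \<alpha> \<open>0 \<le> t\<close>] by (simp add: mult_ac)
  also have "\<dots> < x * (2 * y)"
    using large by simp
  also have "\<dots> \<le> x * (2 * (M + 1))"
    using assms by (intro mult_left_mono) auto
  finally show ?thesis
    using \<open>0 \<le> M\<close> by simp
qed

lemma sqrt_bound_of_comparable_factors:
  fixes \<beta> \<delta> c t x y :: real
  assumes "0 < \<delta>" and \<beta>: "\<beta>\<^sup>2 \<le> \<delta> * c / 2" and "0 \<le> t" "0 \<le> y"
    and comparable: "\<delta> * x \<le> y" and large: "c * t < 2 * (x * y)"
  shows "\<beta> * sqrt t < y"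
proof -
  have "(\<beta> * sqrt t)\<^sup>2 = \<beta>\<^sup>2 * t"
    using \<open>0 \<le> t\<close> by (simp add: power_mult_distrib)
  also have "\<dots> \<le> \<delta> * (c * t) / 2"
    using mult_right_mono[OF \<beta> \<open>0 \<le> t\<close>] by simp
  also have "\<dots> < \<delta> * (x * y)"
    using large \<open>0 < \<delta>\<close> by simp
  also have "\<dots> \<le> y\<^sup>2"
    using mult_right_mono[OF comparable \<open>0 \<le> y\<close>] by (simp add: power2_eq_square mult_ac)
  finally show ?thesis
    using \<open>0 \<le> y\<close> by (rule power2_less_imp_less)
qed

lemma dominated_by_regime_i_if_bounded:
  assumes adm: "admissible p q" and c: "0 < c"
    and large: "\<forall>\<^sub>F j in sequentially. 1 \<le> R j \<and> c * real (R j) < 2 * (real (p (R j)) * real (q (R j)))"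
    and bounded: "\<exists>\<^sub>F j in sequentially. q (R j) \<le> M"
  shows "\<exists>P Q. regime_i P Q \<and> (\<exists>\<^sub>F j in sequentially. P (R j) \<le> p (R j) \<and> Q (R j) \<le> q (R j))"
proof -
  define \<alpha> where "\<alpha> = min (c / (2 * (real M + 1))) (1 / 2)"
  have \<alpha>: "0 < \<alpha>" "\<alpha> < 1"
    using c by (auto simp: \<alpha>_def)
  have \<alpha>_M: "\<alpha> * (2 * (real M + 1)) \<le> c"
    using min.cobounded1[of "c / (2 * (real M + 1))" "1 / 2"]
    by (simp add: \<alpha>_def le_divide_eq)
  define P where "P n = pos_floor (\<alpha> * real n)" for n
  have "regime_i P (\<lambda>_. 1)"
  proof -
    have "admissible P (\<lambda>_. 1)"
      using \<alpha> by (auto simp: admissible_def P_def Suc_le_eq intro!: pos_floor_le)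
    moreover have "(\<lambda>n. real (P n) / real n) \<longlonglongrightarrow> \<alpha>"
      unfolding P_def by (rule tendsto_pos_floor_scaled_div[OF filterlim_real_sequentially \<alpha>(1)])
    ultimately show ?thesis
      using \<alpha> by (auto simp: regime_i_def)
  qed
  moreover have "\<forall>\<^sub>F j in sequentially. q (R j) \<le> M \<longrightarrow> P (R j) \<le> p (R j) \<and> 1 \<le> q (R j)"
    using large
  proof eventually_elim
    case (elim j)
    have adm_j: "1 \<le> q (R j)" "q (R j) \<le> p (R j)" "p (R j) \<le> R j"
      using admissibleD[OF adm] elim by auto
    show ?case
    proof (intro impI conjI adm_j)
      assume "q (R j) \<le> M"
      then have "\<alpha> * real (R j) \<le> real (p (R j))"
        using linear_bound_of_bounded_factor[OF \<alpha>_M, where t = "real (R j)"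
            and x = "real (p (R j))" and y = "real (q (R j))"] elim by simp
      then show "P (R j) \<le> p (R j)"
        using adm_j unfolding P_def by (intro pos_floor_le) auto
    qed
  qed
  then have "\<exists>\<^sub>F j in sequentially. P (R j) \<le> p (R j) \<and> 1 \<le> q (R j)"
    using bounded by (rule frequently_mp)
  ultimately show ?thesis
    by (intro exI[of _ P] exI[of _ "\<lambda>_. 1"] conjI)
qed

lemma dominated_by_regime_iii_if_comparable:
  assumes adm: "admissible p q" and c: "0 < c" and \<delta>: "0 < \<delta>"
    and large: "\<forall>\<^sub>F j in sequentially. 1 \<le> R j \<and> c * real (R j) < 2 * (real (p (R j)) * real (q (R j)))"
    and comparable: "\<exists>\<^sub>F j in sequentially. \<delta> * real (p (R j)) \<le> real (q (R j))"
  shows "\<exists>P Q. regime_iii P Q \<and> (\<exists>\<^sub>F j in sequentially. P (R j) \<le> p (R j) \<and> Q (R j) \<le> q (R j))"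
proof -
  define \<beta> where "\<beta> = min 1 (sqrt (\<delta> * c / 2))"
  have \<beta>: "0 < \<beta>" "\<beta> \<le> 1"
    using \<delta> c by (auto simp: \<beta>_def)
  have \<beta>_sq: "\<beta>\<^sup>2 \<le> \<delta> * c / 2"
  proof -
    have "\<beta>\<^sup>2 \<le> (sqrt (\<delta> * c / 2))\<^sup>2"
      using \<beta> by (intro power_mono) (auto simp: \<beta>_def)
    then show ?thesis using \<delta> c by simp
  qed
  define s where "s n = pos_floor (\<beta> * sqrt (real n))" for n
  have "regime_iii s s"
  proof -
    have "\<beta> * sqrt (real n) \<le> real n" if "1 \<le> n" for n
    proof -
      have "\<beta> * sqrt (real n) \<le> sqrt (real n)"
        using \<beta> by (intro mult_left_le_one_le) auto
      also have "\<dots> \<le> real n"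
        using that by (intro sqrt_le_self) simp
      finally show ?thesis .
    qed
    then have "admissible s s"
      unfolding admissible_def s_def by (simp add: Suc_le_eq pos_floor_le)
    moreover have "filterlim (\<lambda>n. sqrt (real n)) at_top sequentially"
      by real_asymp
    then have "(\<lambda>n. real (s n) / sqrt (real n)) \<longlonglongrightarrow> \<beta>"
      unfolding s_def by (rule tendsto_pos_floor_scaled_div[OF _ \<beta>(1)])
    ultimately show ?thesis
      using \<beta> by (auto simp: regime_iii_def)
  qed
  moreover have "\<forall>\<^sub>F j in sequentially.
      \<delta> * real (p (R j)) \<le> real (q (R j)) \<longrightarrow> s (R j) \<le> p (R j) \<and> s (R j) \<le> q (R j)"
    using large
  proof eventually_elim
    case (elim j)
    have adm_j: "1 \<le> q (R j)" "q (R j) \<le> p (R j)"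
      using admissibleD[OF adm] elim by auto
    show ?case
    proof (intro impI)
      assume "\<delta> * real (p (R j)) \<le> real (q (R j))"
      then have "\<beta> * sqrt (real (R j)) < real (q (R j))"
        using sqrt_bound_of_comparable_factors[OF \<delta> \<beta>_sq, where t = "real (R j)"
            and x = "real (p (R j))" and y = "real (q (R j))"] elim by simp
      then have "s (R j) \<le> q (R j)"
        using adm_j unfolding s_def by (intro pos_floor_le) auto
      with adm_j show "s (R j) \<le> p (R j) \<and> s (R j) \<le> q (R j)"
        by simp
    qed
  qed
  then have "\<exists>\<^sub>F j in sequentially. s (R j) \<le> p (R j) \<and> s (R j) \<le> q (R j)"
    using comparable by (rule frequently_mp)
  ultimately show ?thesis by blast
qed

lemma regime_ii_splice:
  assumes adm: "admissible p q" and c: "0 < c" and R: "strict_mono R"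
    and q_top: "filterlim (\<lambda>j. q (R j)) at_top sequentially"
    and ratio: "(\<lambda>j. real (q (R j)) / real (p (R j))) \<longlonglongrightarrow> 0"
    and lim: "(\<lambda>j. real (p (R j)) * real (q (R j)) / real (R j)) \<longlonglongrightarrow> c"
  shows "\<exists>P Q. regime_ii P Q \<and> (\<forall>j. P (R j) = p (R j) \<and> Q (R j) = q (R j))"
proof -
  obtain P0 Q0 where adm0: "admissible P0 Q0" and Q0_top: "filterlim Q0 at_top sequentially"
    and ratio0: "(\<lambda>n. real (Q0 n) / real (P0 n)) \<longlonglongrightarrow> 0"
    and lim0: "(\<lambda>n. real (P0 n) * real (Q0 n) / real n) \<longlonglongrightarrow> c"
    using exists_regime_ii_with_limit[OF c] by blast
  define P where "P n = (if n \<in> range R then p n else P0 n)" for n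
  define Q where "Q n = (if n \<in> range R then q n else Q0 n)" for n
  have "admissible P Q"
    using adm adm0 by (simp add: admissible_def P_def Q_def)
  moreover have "filterlim Q at_top sequentially"
    unfolding Q_def by (rule filterlim_if_range_strict_mono[OF R q_top Q0_top])
  moreover have "(\<lambda>n. real (Q n) / real (P n)) =
      (\<lambda>n. if n \<in> range R then real (q n) / real (p n) else real (Q0 n) / real (P0 n))"
    by (auto simp: P_def Q_def)
  then have "(\<lambda>n. real (Q n) / real (P n)) \<longlonglongrightarrow> 0"
    using filterlim_if_range_strict_mono[OF R ratio ratio0] by simp
  moreover have "(\<lambda>n. real (P n) * real (Q n) / real n) =
      (\<lambda>n. if n \<in> range R then real (p n) * real (q n) / real n else real (P0 n) * real (Q0 n) / real n)"
    by (auto simp: P_def Q_def)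
  then have "(\<lambda>n. real (P n) * real (Q n) / real n) \<longlonglongrightarrow> c"
    using filterlim_if_range_strict_mono[OF R lim lim0] by simp
  ultimately have "regime_ii P Q"
    using c unfolding regime_ii_def by blast
  moreover have "\<forall>j. P (R j) = p (R j) \<and> Q (R j) = q (R j)"
    by (simp add: P_def Q_def)
  ultimately show ?thesis by blast
qed

lemma dominated_by_regime_ii_if_unbounded_and_thin:
  assumes adm: "admissible p q" and c: "0 < c" and R: "strict_mono R"
    and lim: "(\<lambda>n. real (p n) * real (q n) / real n) \<longlonglongrightarrow> c"
    and unbounded: "\<not> (\<exists>M. \<exists>\<^sub>F j in sequentially. q (R j) \<le> M)"
    and thin: "\<not> (\<exists>\<delta>>0. \<exists>\<^sub>F j in sequentially. \<delta> * real (p (R j)) \<le> real (q (R j)))"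
  shows "\<exists>P Q. regime_ii P Q \<and> (\<exists>\<^sub>F j in sequentially. P (R j) \<le> p (R j) \<and> Q (R j) \<le> q (R j))"
proof -
  have "\<forall>\<^sub>F j in sequentially. M < q (R j)" for M
    using unbounded by (simp add: not_frequently not_le)
  then have q_top: "filterlim (\<lambda>j. q (R j)) at_top sequentially"
    unfolding filterlim_at_top by (meson eventually_mono less_imp_le)
  have ratio: "(\<lambda>j. real (q (R j)) / real (p (R j))) \<longlonglongrightarrow> 0"
  proof (rule order_tendstoI)
    fix \<epsilon> :: real assume "0 < \<epsilon>"
    then have "\<forall>\<^sub>F j in sequentially. real (q (R j)) < \<epsilon> * real (p (R j))"
      using thin by (auto simp: not_frequently not_le)
    then show "\<forall>\<^sub>F j in sequentially. real (q (R j)) / real (p (R j)) < \<epsilon>"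
      using eventually_ge_at_top[of 1]
    proof eventually_elim
      case (elim j)
      have "1 \<le> p (R j)"
        using admissibleD[OF adm] elim R seq_suble[OF R, of j] by (meson order.trans)
      with elim show ?case by (simp add: divide_less_eq mult.commute)
    qed
  qed (auto intro!: always_eventually less_le_trans[of _ 0])
  then obtain P Q where "regime_ii P Q" "\<forall>j. P (R j) = p (R j) \<and> Q (R j) = q (R j)"
    using regime_ii_splice[OF adm c R q_top _ LIMSEQ_subseq_LIMSEQ[OF lim R, unfolded comp_def]] by blast
  then show ?thesis
    by (intro exI[of _ P] exI[of _ Q]) simp
qed

lemma exists_dominated_regime:
  assumes adm: "admissible p q" and c: "0 < c" and R: "strict_mono R"
    and lim: "(\<lambda>n. real (p n) * real (q n) / real n) \<longlonglongrightarrow> c"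
  shows "\<exists>P Q. (regime_i P Q \<or> regime_ii P Q \<or> regime_iii P Q) \<and>
           (\<exists>\<^sub>F j in sequentially. P (R j) \<le> p (R j) \<and> Q (R j) \<le> q (R j))"
proof -
  have "\<forall>\<^sub>F j in sequentially. c / 2 < real (p (R j)) * real (q (R j)) / real (R j)"
    using order_tendstoD(1)[OF LIMSEQ_subseq_LIMSEQ[OF lim R, unfolded comp_def], of "c / 2"] c
    by simp
  then have large: "\<forall>\<^sub>F j in sequentially.
      1 \<le> R j \<and> c * real (R j) < 2 * (real (p (R j)) * real (q (R j)))"
    using eventually_ge_at_top[of 1]
  proof eventually_elim
    case (elim j)
    then have "1 \<le> R j"
      using seq_suble[OF R, of j] by linarith
    with elim show ?case by (simp add: field_simps)
  qed
  consider (bounded) M where "\<exists>\<^sub>F j in sequentially. q (R j) \<le> M"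
    | (comparable) \<delta> where "0 < \<delta>" "\<exists>\<^sub>F j in sequentially. \<delta> * real (p (R j)) \<le> real (q (R j))"
    | (thin) "\<not> (\<exists>M. \<exists>\<^sub>F j in sequentially. q (R j) \<le> M)"
        "\<not> (\<exists>\<delta>>0. \<exists>\<^sub>F j in sequentially. \<delta> * real (p (R j)) \<le> real (q (R j)))"
    by blast
  then show ?thesis
  proof cases
    case bounded
    then show ?thesis
      using dominated_by_regime_i_if_bounded[OF adm c large] by blast
  next
    case comparable
    then show ?thesis
      using dominated_by_regime_iii_if_comparable[OF adm c _ large] by blast
  next
    case thin
    then show ?thesis
      using dominated_by_regime_ii_if_unbounded_and_thin[OF adm c R lim] by blast
  qed
qed

lemma frequently_le_if_monotone:
  fixes f :: "nat \<Rightarrow> nat \<Rightarrow> nat \<Rightarrow> real"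
  assumes mono: "\<And>n a a' b b'. 1 \<le> a \<Longrightarrow> a \<le> a' \<Longrightarrow> a' \<le> n \<Longrightarrow> 1 \<le> b \<Longrightarrow> b \<le> b' \<Longrightarrow> b' \<le> n \<Longrightarrow>
                   f n a b \<le> f n a' b'"
    and "admissible P Q" "admissible p q" "strict_mono R"
    and dom: "\<exists>\<^sub>F j in sequentially. P (R j) \<le> p (R j) \<and> Q (R j) \<le> q (R j)"
  shows "\<exists>\<^sub>F j in sequentially. f (R j) (P (R j)) (Q (R j)) \<le> f (R j) (p (R j)) (q (R j))"
  using dom
proof (rule frequently_mp[rotated])
  show "\<forall>\<^sub>F j in sequentially. P (R j) \<le> p (R j) \<and> Q (R j) \<le> q (R j) \<longrightarrow>
      f (R j) (P (R j)) (Q (R j)) \<le> f (R j) (p (R j)) (q (R j))"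
    using eventually_ge_at_top[of 1]
  proof eventually_elim
    case (elim j)
    then have "1 \<le> R j"
      using seq_suble[OF \<open>strict_mono R\<close>, of j] by linarith
    then show ?case
      using admissibleD[OF \<open>admissible P Q\<close>, of "R j"] admissibleD[OF \<open>admissible p q\<close>, of "R j"]
      by (auto intro: mono)
  qed
qed

theorem lemma2p15:
  fixes f :: "nat \<Rightarrow> nat \<Rightarrow> nat \<Rightarrow> real"
  assumes nonneg: "\<And>n a b. 1 \<le> n \<Longrightarrow> a \<in> {1..n} \<Longrightarrow> b \<in> {1..n} \<Longrightarrow> 0 \<le> f n a b"
    and mono1: "\<And>n a a' b. 1 \<le> n \<Longrightarrow> a \<in> {1..n} \<Longrightarrow> a' \<in> {1..n} \<Longrightarrow> b \<in> {1..n} \<Longrightarrow>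
                  a \<le> a' \<Longrightarrow> f n a b \<le> f n a' b"
    and mono2: "\<And>n a b b'. 1 \<le> n \<Longrightarrow> a \<in> {1..n} \<Longrightarrow> b \<in> {1..n} \<Longrightarrow> b' \<in> {1..n} \<Longrightarrow>
                  b \<le> b' \<Longrightarrow> f n a b \<le> f n a b'"
    and case_i: "\<And>p q. admissible p q \<Longrightarrow> (\<forall>n\<ge>1. q n = 1) \<Longrightarrow>
                  (\<exists>c. 0 < c \<and> c < 1 \<and> (\<lambda>n. real (p n) / real n) \<longlonglongrightarrow> c) \<Longrightarrow>
                  Liminf sequentially (\<lambda>n. ereal (f n (p n) (q n))) > 0"
    and case_ii: "\<And>p q. admissible p q \<Longrightarrow> filterlim q at_top sequentially \<Longrightarrow>
                  (\<lambda>n. real (q n) / real (p n)) \<longlonglongrightarrow> 0 \<Longrightarrow>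
                  (\<exists>c. 0 < c \<and> (\<lambda>n. real (p n) * real (q n) / real n) \<longlonglongrightarrow> c) \<Longrightarrow>
                  Liminf sequentially (\<lambda>n. ereal (f n (p n) (q n))) > 0"
    and case_iii: "\<And>p q. admissible p q \<Longrightarrow>
                  (\<exists>a. 0 < a \<and> (\<lambda>n. real (p n) / sqrt (real n)) \<longlonglongrightarrow> a) \<Longrightarrow>
                  (\<exists>b. 0 < b \<and> (\<lambda>n. real (q n) / sqrt (real n)) \<longlonglongrightarrow> b) \<Longrightarrow>
                  Liminf sequentially (\<lambda>n. ereal (f n (p n) (q n))) > 0"
  shows "\<And>p q. admissible p q \<Longrightarrow>
                  (\<exists>c. 0 < c \<and> (\<lambda>n. real (p n) * real (q n) / real n) \<longlonglongrightarrow> c) \<Longrightarrow>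
                  Liminf sequentially (\<lambda>n. ereal (f n (p n) (q n))) > 0"
proof -
  have mono: "f n a b \<le> f n a' b'"
    if "1 \<le> a" "a \<le> a'" "a' \<le> n" "1 \<le> b" "b \<le> b'" "b' \<le> n" for n a a' b b'
    using order.trans[OF mono1[of n a a' b] mono2[of n a' b b']] that by simp
  fix p q
  assume adm: "admissible p q"
    and "\<exists>c. 0 < c \<and> (\<lambda>n. real (p n) * real (q n) / real n) \<longlonglongrightarrow> c"
  then obtain c where c: "0 < c" and lim: "(\<lambda>n. real (p n) * real (q n) / real n) \<longlonglongrightarrow> c"
    by blast
  show "0 < Liminf sequentially (\<lambda>n. ereal (f n (p n) (q n)))"
  proof (rule Liminf_pos_if_dominates_along_subseqs)
    fix R :: "nat \<Rightarrow> nat"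
    assume R: "strict_mono R"
    obtain P Q where regime: "regime_i P Q \<or> regime_ii P Q \<or> regime_iii P Q"
      and dom: "\<exists>\<^sub>F j in sequentially. P (R j) \<le> p (R j) \<and> Q (R j) \<le> q (R j)"
      using exists_dominated_regime[OF adm c R lim] by blast
    have "0 < Liminf sequentially (\<lambda>n. ereal (f n (P n) (Q n)))"
      using regime case_i case_ii case_iii
      unfolding regime_i_def regime_ii_def regime_iii_def by blast
    moreover have "admissible P Q"
      using regime unfolding regime_i_def regime_ii_def regime_iii_def by blast
    then have "\<exists>\<^sub>F j in sequentially. f (R j) (P (R j)) (Q (R j)) \<le> f (R j) (p (R j)) (q (R j))"
      using frequently_le_if_monotone[of f P Q p q R] mono adm R dom by blast
    ultimately show "\<exists>G. 0 < Liminf sequentially (\<lambda>n. ereal (G n)) \<and>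
        (\<exists>\<^sub>F j in sequentially. G (R j) \<le> f (R j) (p (R j)) (q (R j)))"
      by (intro exI[of _ "\<lambda>n. f n (P n) (Q n)"] conjI)
  qed
qed

end
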